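(* Let $\mathscr{T}$ be an accessible subalgebra of $\mathfrak{gl}(d,\mathbb{R})$. There exists $K>0$ such that for all $u,v\in\mathbb{R}P^{d-1}$ there is a family $\{\mathfrak{R}_{u,v}(t)\}_{t\in[0,1]}\subset\mathscr{T}$ with $\|\mathfrak{R}_{u,v}(t)\|\le K$ for all $t$ such that $\Phi^1_{\mathfrak{R}_{u,v}}u=v$, where $\Phi^t_{\mathfrak{R}_{u,v}}$ is the solution (with $\Phi^0=\mathrm{Id}$) of the linear equation $\dot{u}(t)=\mathfrak{R}_{u,v}(t)u(t)$.
   Context: A non-empty closed subalgebra $\mathscr{T}\subseteq\mathfrak{gl}(d,\mathbb{R})$ is accessible if its associated Lie subgroup acts transitively on $\mathbb{R}P^{d-1}$. *)

theory Defs
  imports "HOL-Analysis.Analysis"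
begin

text \<open>Matrices in gl(d,R) are represented as real^'n^'n with d = CARD('n).
  Matrix product is **, identity is mat 1.\<close>

fun matpow :: "real^'n^'n \<Rightarrow> nat \<Rightarrow> real^'n^'n" where
  "matpow A 0 = mat 1"
| "matpow A (Suc k) = A ** matpow A k"

definition mexp :: "real^'n^'n \<Rightarrow> real^'n^'n" where
  "mexp A = (\<Sum>k. (1 / fact k) *\<^sub>R matpow A k)"

definition lie_subalgebra :: "(real^'n^'n) set \<Rightarrow> bool" where
  "lie_subalgebra T \<longleftrightarrow> T \<noteq> {} \<and> subspace T \<and>
     (\<forall>A\<in>T. \<forall>B\<in>T. A ** B - B ** A \<in> T)"

text \<open>The connected Lie subgroup associated with T: the group generated by exp(T).
  (Since exp(-A) = exp(A)^{-1} and T is a subspace, the monoid generated is a group.)\<close>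
inductive_set lie_group_of :: "(real^'n^'n) set \<Rightarrow> (real^'n^'n) set"
  for T :: "(real^'n^'n) set" where
  id: "mat 1 \<in> lie_group_of T"
| step: "A \<in> T \<Longrightarrow> g \<in> lie_group_of T \<Longrightarrow> mexp A ** g \<in> lie_group_of T"

text \<open>Points of RP^{d-1} are represented by non-zero vectors; two vectors represent the
  same point iff they are non-zero multiples of each other.\<close>
definition proj_eq :: "real^'n \<Rightarrow> real^'n \<Rightarrow> bool" where
  "proj_eq u v \<longleftrightarrow> u \<noteq> 0 \<and> v \<noteq> 0 \<and> (\<exists>c. c \<noteq> 0 \<and> u = c *\<^sub>R v)"

definition accessible :: "(real^'n^'n) set \<Rightarrow> bool" where
  "accessible T \<longleftrightarrow> lie_subalgebra T \<and>
     (\<forall>u v. u \<noteq> 0 \<longrightarrow> v \<noteq> 0 \<longrightarrow> (\<exists>g\<in>lie_group_of T. proj_eq (g *v u) v))"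

text \<open>Phi is the (Caratheodory) fundamental solution on [0,1] of Phi' = R(t) Phi, Phi(0) = Id.\<close>
definition fundamental_solution :: "(real \<Rightarrow> real^'n^'n) \<Rightarrow> (real \<Rightarrow> real^'n^'n) \<Rightarrow> bool" where
  "fundamental_solution R \<Phi> \<longleftrightarrow>
     (\<forall>t\<in>{0..1}. ((\<lambda>s. R s ** \<Phi> s) has_integral (\<Phi> t - mat 1)) {0..t})"

end

theory Submission
  imports Defs
begin

text \<open>Let \<open>G\<^sub>n\<close> be the set of products of \<open>n\<close> exponentials \<open>mexp A\<close> with
  \<open>A \<in> T\<close> and \<open>norm A \<le> n\<close>. These sets are compact and exhaust the group of \<open>T\<close>. By
  accessibility the compact sets \<open>{c *\<^sub>R (g *v w) | g \<in> G\<^sub>n, 1 / (n + 1) \<le> \<bar>c\<bar> \<le> n}\<close>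
  cover \<open>\<real>\<^sup>d - {0}\<close>, so by Baire's theorem one of them contains a ball. Moving this ball
  around with the group and covering the unit sphere by finitely many of the resulting open
  sets shows that one \<open>n\<close> suffices to steer a fixed \<open>w\<close> to every direction. Hence \<open>u\<close> is
  steered to \<open>v\<close> by an element of \<open>G\<^sub>2\<^sub>n\<close> (go back from \<open>u\<close> to \<open>w\<close>, then on to
  \<open>v\<close>), and a product of \<open>L\<close> exponentials is the time-one map of a piecewise constant
  control in \<open>T\<close> of norm at most \<open>L\<close> times the norms of the factors.\<close>

section \<open>The matrix exponential\<close>

lemma matrix_add_rdistrib: "(B + C) ** A = B ** A + C ** A"
  by (vector matrix_matrix_mult_def sum.distrib[symmetric] field_simps)

lemma bounded_bilinear_matrix_mult:
  "bounded_bilinear ((**) :: real^'n^'m \<Rightarrow> real^'p^'n \<Rightarrow> real^'p^'m)"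
  unfolding bilinear_conv_bounded_bilinear[symmetric] bilinear_def
  by (auto intro!: linearI simp: matrix_add_ldistrib matrix_add_rdistrib matrix_scalar_ac scalar_matrix_assoc)

lemma bounded_bilinear_matrix_vector_mult:
  "bounded_bilinear ((*v) :: real^'n^'m \<Rightarrow> real^'n \<Rightarrow> real^'m)"
  unfolding bilinear_conv_bounded_bilinear[symmetric] bilinear_def
  by (auto intro!: linearI simp: matrix_vector_right_distrib matrix_vector_mult_add_rdistrib
        matrix_vector_mult_scaleR scaleR_matrix_vector_assoc)

lemmas matrix_mult_bounded_linear_left =
  bounded_bilinear.bounded_linear_left[OF bounded_bilinear_matrix_mult]
lemmas matrix_mult_bounded_linear_right =
  bounded_bilinear.bounded_linear_right[OF bounded_bilinear_matrix_mult]

lemma matpow_commute: "matpow A k ** A = A ** matpow A k"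
  by (induction k) (auto simp: matrix_mul_assoc[symmetric])

lemma matpow_scaleR: "matpow (c *\<^sub>R A) k = (c ^ k) *\<^sub>R matpow A k"
  by (induction k) (auto simp: matrix_scalar_ac scalar_matrix_assoc mult.commute)

lemma continuous_on_matpow: "continuous_on S (\<lambda>A::real^'n^'n. matpow A k)"
  by (induction k)
     (auto intro!: bounded_bilinear.continuous_on[OF bounded_bilinear_matrix_mult] continuous_on_id)

lemma norm_matpow_le:
  assumes K: "0 < K" "\<And>(a::real^'n^'n) (b::real^'n^'n). norm (a ** b) \<le> norm a * norm b * K"
  shows "norm (matpow (A::real^'n^'n) k) \<le> norm (mat 1 :: real^'n^'n) * (K * norm A) ^ k"
proof (induction k)
  case (Suc k)
  have "norm (matpow A (Suc k)) \<le> norm A * norm (matpow A k) * K"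
    using K(2) by simp
  also have "\<dots> \<le> norm A * (norm (mat 1 :: real^'n^'n) * (K * norm A) ^ k) * K"
    using Suc.IH K(1) by (intro mult_right_mono mult_left_mono) auto
  finally show ?case by (simp add: algebra_simps)
qed simp

lemma norm_mexp_term_le:
  assumes K: "0 < K" "\<And>(a::real^'n^'n) (b::real^'n^'n). norm (a ** b) \<le> norm a * norm b * K"
    and "norm (A::real^'n^'n) \<le> r"
  shows "norm ((1 / fact k) *\<^sub>R matpow A k) \<le> norm (mat 1 :: real^'n^'n) * (K * r) ^ k / fact k"
proof -
  have "norm ((1 / fact k) *\<^sub>R matpow A k) \<le> norm (mat 1 :: real^'n^'n) * (K * norm A) ^ k / fact k"
    using norm_matpow_le[OF K] by (simp add: divide_right_mono)
  also have "\<dots> \<le> norm (mat 1 :: real^'n^'n) * (K * r) ^ k / fact k"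
    using assms by (intro divide_right_mono mult_left_mono power_mono) auto
  finally show ?thesis .
qed

lemma summable_exp_series_scaled: "summable (\<lambda>k. c * x ^ k / fact k :: real)"
  using summable_mult[OF summable_exp_generic[of x], of c] by (simp add: divide_inverse ac_simps)

lemma uniform_limit_mexp:
  assumes "\<And>x. x \<in> S \<Longrightarrow> norm (f x :: real^'n^'n) \<le> r"
  shows "uniform_limit S (\<lambda>n x. \<Sum>k<n. (1 / fact k) *\<^sub>R matpow (f x) k) (\<lambda>x. mexp (f x))
           sequentially"
proof -
  obtain K where K: "0 < K" "\<And>(a::real^'n^'n) (b::real^'n^'n). norm (a ** b) \<le> norm a * norm b * K"
    using bounded_bilinear.pos_bounded[OF bounded_bilinear_matrix_mult] by blast
  show ?thesis
    unfolding mexp_def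
    by (rule Weierstrass_m_test[OF norm_mexp_term_le[OF K assms] summable_exp_series_scaled])
qed

lemma mexp_sums: "(\<lambda>k. (1 / fact k) *\<^sub>R matpow (A::real^'n^'n) k) sums mexp A"
  using tendsto_uniform_limitI[OF uniform_limit_mexp[of "{A}" id "norm A"]]
  by (simp add: sums_def)

lemma mexp_scaleR_sums: "(\<lambda>j. (x ^ j / fact j) *\<^sub>R matpow (A::real^'n^'n) j) sums mexp (x *\<^sub>R A)"
  using mexp_sums[of "x *\<^sub>R A"] by (simp add: matpow_scaleR)

lemma mexp_zero: "mexp (0::real^'n^'n) = mat 1"
proof -
  have "(\<lambda>k. (1 / fact k) *\<^sub>R matpow (0::real^'n^'n) k) = (\<lambda>k. if k = 0 then mat 1 else 0)"
  proof
    show "(1 / fact k) *\<^sub>R matpow (0::real^'n^'n) k = (if k = 0 then mat 1 else 0)" for k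
      by (cases k) simp_all
  qed
  then have "(\<lambda>k. (1 / fact k) *\<^sub>R matpow (0::real^'n^'n) k) sums mat 1"
    using sums_single[of 0 "\<lambda>_. mat 1 :: real^'n^'n"] by simp
  then show ?thesis
    using mexp_sums sums_unique2 by blast
qed

lemma mexp_scaleR_commute: "A ** mexp (c *\<^sub>R A) = mexp (c *\<^sub>R A) ** (A::real^'n^'n)"
proof -
  have "A ** ((1 / fact k) *\<^sub>R matpow (c *\<^sub>R A) k) = ((1 / fact k) *\<^sub>R matpow (c *\<^sub>R A) k) ** A"
    for k
    by (simp add: matpow_scaleR matrix_scalar_ac scalar_matrix_assoc[symmetric] matpow_commute)
  then have "(\<lambda>k. ((1 / fact k) *\<^sub>R matpow (c *\<^sub>R A) k) ** A) sums (A ** mexp (c *\<^sub>R A))"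
    using bounded_linear.sums[OF matrix_mult_bounded_linear_right[of A] mexp_sums[of "c *\<^sub>R A"]] by simp
  then show ?thesis
    using bounded_linear.sums[OF matrix_mult_bounded_linear_left mexp_sums] sums_unique2 by blast
qed

lemma continuous_on_mexp: "continuous_on S (mexp :: real^'n^'n \<Rightarrow> _)"
proof -
  have "continuous_on (ball 0 r) (mexp :: real^'n^'n \<Rightarrow> _)" for r
    by (rule uniform_limit_theorem[OF _ uniform_limit_mexp[of _ id r, simplified]])
       (auto intro!: always_eventually continuous_on_sum continuous_on_scaleR continuous_on_matpow)
  then have "isCont mexp (A::real^'n^'n)" for A
    by (rule continuous_on_interior[of "ball 0 (norm A + 1)"]) auto
  then show ?thesis
    by (simp add: continuous_at_imp_continuous_on)
qed

text \<open>The right-hand side is the termwise derivative in \<open>x\<close> of the partial sum of length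
  \<open>n + 1\<close> of the series for \<open>mexp (x *\<^sub>R A)\<close>.\<close>
lemma matrix_mult_mexp_partial_sum:
  "A ** (\<Sum>j<n. (x ^ j / fact j) *\<^sub>R matpow A j) =
     (\<Sum>i<Suc n. (of_nat i * x ^ (i - 1) / fact i) *\<^sub>R matpow (A::real^'n^'n) i)"
proof -
  have step: "A ** ((x ^ j / fact j) *\<^sub>R matpow A j) =
      (of_nat (Suc j) * x ^ (Suc j - 1) / fact (Suc j)) *\<^sub>R matpow A (Suc j)" for j
    by (simp add: matrix_scalar_ac scalar_matrix_assoc[symmetric] del: of_nat_Suc)
  have "A ** (\<Sum>j<n. (x ^ j / fact j) *\<^sub>R matpow A j) = (\<Sum>j<n. A ** ((x ^ j / fact j) *\<^sub>R matpow A j))"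
    by (rule bounded_bilinear.sum_right[OF bounded_bilinear_matrix_mult])
  also have "\<dots> = (\<Sum>j<n. (of_nat (Suc j) * x ^ (Suc j - 1) / fact (Suc j)) *\<^sub>R matpow A (Suc j))"
    by (simp only: step)
  also have "\<dots> = (\<Sum>i<Suc n. (of_nat i * x ^ (i - 1) / fact i) *\<^sub>R matpow A i)"
    by (subst sum.lessThan_Suc_shift) simp
  finally show ?thesis .
qed

lemma uniform_limit_mexp_derivative_series:
  "uniform_limit (ball t 1) (\<lambda>n x. \<Sum>i<n. (of_nat i * x ^ (i - 1) / fact i) *\<^sub>R matpow A i)
     (\<lambda>x. A ** mexp (x *\<^sub>R A)) sequentially"
  for A :: "real^'n^'n"
proof -
  have "uniform_limit (ball t 1) (\<lambda>n x. \<Sum>k<n. (1 / fact k) *\<^sub>R matpow (x *\<^sub>R A) k)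
          (\<lambda>x. mexp (x *\<^sub>R A)) sequentially"
    by (rule uniform_limit_mexp[where r = "(\<bar>t\<bar> + 1) * norm A"])
       (auto simp: dist_real_def intro!: mult_right_mono)
  then have "uniform_limit (ball t 1) (\<lambda>n x. \<Sum>j<n. (x ^ j / fact j) *\<^sub>R matpow A j)
          (\<lambda>x. mexp (x *\<^sub>R A)) sequentially"
    by (simp add: matpow_scaleR)
  then have "uniform_limit (ball t 1) (\<lambda>n x. A ** (\<Sum>j<n. (x ^ j / fact j) *\<^sub>R matpow A j))
          (\<lambda>x. A ** mexp (x *\<^sub>R A)) sequentially"
    by (rule bounded_linear.uniform_limit[OF matrix_mult_bounded_linear_right])
  then have "uniform_limit (ball t 1)
               (\<lambda>n x. \<Sum>i<Suc n. (of_nat i * x ^ (i - 1) / fact i) *\<^sub>R matpow A i)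
               (\<lambda>x. A ** mexp (x *\<^sub>R A)) sequentially"
    by (simp add: matrix_mult_mexp_partial_sum)
  then show ?thesis
    by (subst filterlim_sequentially_Suc[symmetric])
qed

lemma has_vector_derivative_mexp_scaleR:
  "((\<lambda>s. mexp (s *\<^sub>R A)) has_vector_derivative A ** mexp (t *\<^sub>R A)) (at t)"
  for A :: "real^'n^'n"
proof -
  define c :: "nat \<Rightarrow> real \<Rightarrow> real" where "c i x = of_nat i * x ^ (i - 1) / fact i" for i x
  note U = uniform_limit_mexp_derivative_series[where t = t and A = A, folded c_def]
  have "\<exists>g. \<forall>x\<in>ball t 1. (\<lambda>n. (x ^ n / fact n) *\<^sub>R matpow A n) sums g x \<and>
          (g has_derivative (\<lambda>h. h *\<^sub>R (A ** mexp (x *\<^sub>R A)))) (at x within ball t 1)"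
  proof (rule has_derivative_series[where f' = "\<lambda>n x h. h *\<^sub>R (c n x *\<^sub>R matpow A n)" and x = t])
    show "((\<lambda>s. (s ^ n / fact n) *\<^sub>R matpow A n) has_derivative
            (\<lambda>h. h *\<^sub>R (c n x *\<^sub>R matpow A n))) (at x within ball t 1)" for n x
      by (auto intro!: derivative_eq_intros simp: c_def fun_eq_iff)
    show "\<forall>\<^sub>F n in sequentially. \<forall>x\<in>ball t 1. \<forall>h.
            norm ((\<Sum>i<n. h *\<^sub>R (c i x *\<^sub>R matpow A i)) - h *\<^sub>R (A ** mexp (x *\<^sub>R A))) \<le> e * norm h"
      if "e > 0" for e
      using uniform_limitD[OF U that]
    proof eventually_elim
      case (elim n)
      show ?case
      proof (intro ballI allI)
        fix x h assume "x \<in> ball t 1"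
        then have "norm ((\<Sum>i<n. c i x *\<^sub>R matpow A i) - A ** mexp (x *\<^sub>R A)) \<le> e"
          using elim by (simp add: dist_norm less_imp_le)
        moreover have "(\<Sum>i<n. h *\<^sub>R (c i x *\<^sub>R matpow A i)) - h *\<^sub>R (A ** mexp (x *\<^sub>R A)) =
            h *\<^sub>R ((\<Sum>i<n. c i x *\<^sub>R matpow A i) - A ** mexp (x *\<^sub>R A))"
          by (simp only: scaleR_sum_right scaleR_diff_right)
        ultimately show "norm ((\<Sum>i<n. h *\<^sub>R (c i x *\<^sub>R matpow A i)) - h *\<^sub>R (A ** mexp (x *\<^sub>R A)))
                     \<le> e * norm h"
          by (simp add: mult.commute[of e] mult_left_mono del: scaleR_scaleR)
      qed
    qed
    show "(\<lambda>n. (t ^ n / fact n) *\<^sub>R matpow A n) sums mexp (t *\<^sub>R A)"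
      by (rule mexp_scaleR_sums)
  qed simp_all
  then obtain g where g: "\<And>x. x \<in> ball t 1 \<Longrightarrow> (\<lambda>n. (x ^ n / fact n) *\<^sub>R matpow A n) sums g x \<and>
      (g has_derivative (\<lambda>h. h *\<^sub>R (A ** mexp (x *\<^sub>R A)))) (at x within ball t 1)"
    by blast
  have g_eq: "g x = mexp (x *\<^sub>R A)" if "x \<in> ball t 1" for x
    using g[OF that] mexp_scaleR_sums sums_unique2 by blast
  have "at t within ball t 1 = at t"
    by (rule at_within_open) simp_all
  then have "(g has_derivative (\<lambda>h. h *\<^sub>R (A ** mexp (t *\<^sub>R A)))) (at t)"
    using conjunct2[OF g[of t]] by simp
  then show ?thesis
    unfolding has_vector_derivative_def
    by (rule has_derivative_transform_within_open[OF _ open_ball _ g_eq]) simp_all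
qed

lemma mexp_minus_left_inverse: "mexp (- A) ** mexp A = mat 1"
  for A :: "real^'n^'n"
proof -
  define \<Psi> where "\<Psi> s = mexp (s *\<^sub>R (- A)) ** mexp (s *\<^sub>R A)" for s :: real
  have "(\<Psi> has_derivative (\<lambda>h. 0)) (at s)" for s
  proof -
    have "(\<Psi> has_vector_derivative
            mexp (s *\<^sub>R (- A)) ** (A ** mexp (s *\<^sub>R A)) + (- A ** mexp (s *\<^sub>R (- A))) ** mexp (s *\<^sub>R A))
            (at s)"
      unfolding \<Psi>_def
      by (rule bounded_bilinear.has_vector_derivative[OF bounded_bilinear_matrix_mult
            has_vector_derivative_mexp_scaleR has_vector_derivative_mexp_scaleR])
    moreover have "(- A ** mexp (s *\<^sub>R (- A))) ** mexp (s *\<^sub>R A) =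
                   - (mexp (s *\<^sub>R (- A)) ** (A ** mexp (s *\<^sub>R A)))"
      using mexp_scaleR_commute[of "- A" s]
      by (simp add: matrix_mul_assoc bounded_bilinear.minus_left[OF bounded_bilinear_matrix_mult]
            bounded_bilinear.minus_right[OF bounded_bilinear_matrix_mult])
    ultimately show ?thesis
      by (simp add: has_vector_derivative_def)
  qed
  then obtain C where "\<And>s. \<Psi> s = C"
    using has_derivative_zero_constant[of UNIV \<Psi>] by auto
  then have "\<Psi> 1 = \<Psi> 0"
    by simp
  then show ?thesis
    by (simp add: \<Psi>_def mexp_zero)
qed

lemma mexp_minus_right_inverse: "mexp A ** mexp (- A) = mat 1"
  for A :: "real^'n^'n"
  using mexp_minus_left_inverse[of "- A"] by simp

section \<open>Products of bounded exponentials\<close>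

fun exp_products :: "(real^'n^'n) set \<Rightarrow> real \<Rightarrow> nat \<Rightarrow> (real^'n^'n) set" where
  "exp_products T M 0 = {mat 1}"
| "exp_products T M (Suc L) = (\<lambda>(A, g). mexp A ** g) ` ((T \<inter> cball 0 M) \<times> exp_products T M L)"

lemma exp_products_SucI:
  "A \<in> T \<Longrightarrow> norm A \<le> M \<Longrightarrow> g \<in> exp_products T M L \<Longrightarrow> mexp A ** g \<in> exp_products T M (Suc L)"
  by force

lemma exp_products_SucE:
  assumes "h \<in> exp_products T M (Suc L)"
  obtains A g where "h = mexp A ** g" "A \<in> T" "norm A \<le> M" "g \<in> exp_products T M L"
  using assms by auto

declare exp_products.simps(2)[simp del]

lemma exp_products_mono_bound: "M \<le> M' \<Longrightarrow> exp_products T M L \<subseteq> exp_products T M' L"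
  by (induction L) (auto elim!: exp_products_SucE intro!: exp_products_SucI)

lemma exp_products_subset_Suc:
  "subspace T \<Longrightarrow> 0 \<le> M \<Longrightarrow> exp_products T M L \<subseteq> exp_products T M (Suc L)"
  using exp_products_SucI[of 0 T M _ L] by (simp add: mexp_zero subspace_0 subset_iff)

lemma exp_products_mono:
  assumes "subspace T" "0 \<le> M" "M \<le> M'" "L \<le> L'"
  shows "exp_products T M L \<subseteq> exp_products T M' L'"
proof -
  have "exp_products T M L \<subseteq> exp_products T M L'"
    using \<open>L \<le> L'\<close>
    by (induction rule: dec_induct) (use exp_products_subset_Suc[OF assms(1,2)] in blast)+
  then show ?thesis
    using exp_products_mono_bound[OF \<open>M \<le> M'\<close>] by blast
qed

lemma exp_products_mono_nat:
  "subspace T \<Longrightarrow> m \<le> n \<Longrightarrow> exp_products T (real m) m \<subseteq> exp_products T (real n) n"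
  by (rule exp_products_mono) auto

lemma mexp_mem_exp_products: "A \<in> T \<Longrightarrow> norm A \<le> M \<Longrightarrow> mexp A \<in> exp_products T M 1"
  using exp_products_SucI[of A T M "mat 1" 0] by simp

lemma mult_mem_exp_products:
  "g \<in> exp_products T M L \<Longrightarrow> h \<in> exp_products T M L' \<Longrightarrow> g ** h \<in> exp_products T M (L + L')"
  by (induction L arbitrary: g)
     (auto elim!: exp_products_SucE intro!: exp_products_SucI simp: matrix_mul_assoc[symmetric])

lemma exp_products_inverse:
  assumes "subspace T" "g \<in> exp_products T M L"
  shows "\<exists>g'\<in>exp_products T M L. g' ** g = mat 1 \<and> g ** g' = mat 1"
  using assms(2)
proof (induction L arbitrary: g)
  case (Suc L)
  then obtain A h where g: "g = mexp A ** h" "A \<in> T" "norm A \<le> M" "h \<in> exp_products T M L"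
    by (auto elim: exp_products_SucE)
  then obtain h' where h': "h' \<in> exp_products T M L" "h' ** h = mat 1" "h ** h' = mat 1"
    using Suc.IH by blast
  have "mexp (- A) \<in> exp_products T M 1"
    using g assms(1) by (intro mexp_mem_exp_products) (auto simp: subspace_neg)
  then have "h' ** mexp (- A) \<in> exp_products T M (Suc L)"
    using mult_mem_exp_products[OF h'(1)] by fastforce
  moreover have "(h' ** mexp (- A)) ** g = mat 1" "g ** (h' ** mexp (- A)) = mat 1"
    using h' mexp_minus_left_inverse[of A] mexp_minus_right_inverse[of A]
    by (simp_all add: g(1) matrix_mul_assoc) (simp_all add: matrix_mul_assoc[symmetric])
  ultimately show ?case
    by blast
qed simp

lemma lie_group_of_subset_exp_products:
  assumes "subspace T" "g \<in> lie_group_of T"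
  shows "\<exists>n. g \<in> exp_products T (real n) n"
  using assms(2)
proof (induction rule: lie_group_of.induct)
  case (step A g)
  then obtain n where "g \<in> exp_products T (real n) n"
    by blast
  moreover define m where "m = max n (nat \<lceil>norm A\<rceil>)"
  ultimately have "mexp A ** g \<in> exp_products T (real m) (Suc n)"
    using step.hyps exp_products_mono_bound[of "real n" "real m" T n]
    by (auto simp: m_def intro!: exp_products_SucI intro: real_nat_ceiling_ge order_trans)
  also have "\<dots> \<subseteq> exp_products T (real (Suc m)) (Suc m)"
    using assms(1) by (rule exp_products_mono) (auto simp: m_def)
  finally show ?case
    by blast
qed (auto intro: exI[of _ 0])

lemma compact_exp_products: "closed T \<Longrightarrow> compact (exp_products T M L)"
proof (induction L)
  case (Suc L)
  have "continuous_on UNIV (\<lambda>(A, g). mexp A ** g :: real^'n^'n)"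
    unfolding case_prod_unfold
    by (intro bounded_bilinear.continuous_on[OF bounded_bilinear_matrix_mult]
          continuous_on_compose2[OF continuous_on_mexp] continuous_intros) auto
  then show ?case
    unfolding exp_products.simps(2)
    by (rule compact_continuous_image[OF continuous_on_subset])
       (use Suc in \<open>auto intro!: compact_Times closed_Int_compact\<close>)
qed simp

lemma exp_products_matrix_vector_mult_nonzero:
  assumes "subspace T" "g \<in> exp_products T M L" "w \<noteq> 0"
  shows "g *v w \<noteq> 0"
proof
  assume "g *v w = 0"
  obtain g' where "g' ** g = mat 1"
    using exp_products_inverse[OF assms(1,2)] by blast
  then have "w = g' *v (g *v w)"
    by (simp add: matrix_vector_mul_assoc)
  with \<open>g *v w = 0\<close> \<open>w \<noteq> 0\<close> show False
    by simp
qed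

section \<open>Piecewise constant controls\<close>

lemma has_vector_derivative_mexp_shift:
  "((\<lambda>s. mexp ((s - a) *\<^sub>R A) ** g) has_vector_derivative A ** (mexp ((t - a) *\<^sub>R A) ** g)) (at t)"
  for A :: "real^'n^'n"
proof -
  have "((\<lambda>s. s - a) has_vector_derivative 1) (at t)"
    by (auto intro!: derivative_eq_intros)
  from vector_diff_chain_at[OF this has_vector_derivative_mexp_scaleR[of A "t - a"]]
  have "((\<lambda>s. mexp ((s - a) *\<^sub>R A)) has_vector_derivative A ** mexp ((t - a) *\<^sub>R A)) (at t)"
    by (simp add: o_def)
  from bounded_bilinear.has_vector_derivative[OF bounded_bilinear_matrix_mult this
      has_vector_derivative_const[of g]]
  show ?thesis
    by (simp add: matrix_mul_assoc)
qed

text \<open>The derivative is only required away from the integer times, where the control may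
  jump.\<close>
definition piecewise_flow ::
  "(real^'n^'n) set \<Rightarrow> real \<Rightarrow> nat \<Rightarrow> (real \<Rightarrow> real^'n^'n) \<Rightarrow> (real \<Rightarrow> real^'n^'n) \<Rightarrow> bool" where
  "piecewise_flow T M L R \<Phi> \<longleftrightarrow> \<Phi> 0 = mat 1 \<and> continuous_on {0..real L} \<Phi> \<and>
     (\<forall>t\<in>{0..real L}. R t \<in> T \<and> norm (R t) \<le> M) \<and>
     (\<forall>t\<in>{0<..<real L} - real ` {..L}. (\<Phi> has_vector_derivative R t ** \<Phi> t) (at t))"

lemma piecewise_flow_extend:
  assumes flow: "piecewise_flow T M L R \<Phi>" and A: "A \<in> T" "norm A \<le> M"
  defines "\<Phi>' t \<equiv> if t \<le> real L then \<Phi> t else mexp ((t - real L) *\<^sub>R A) ** \<Phi> (real L)"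
    and "R' t \<equiv> if t \<le> real L then R t else A"
  shows "piecewise_flow T M (Suc L) R' \<Phi>'"
proof -
  have "continuous_on {0..real (Suc L)} \<Phi>'"
    unfolding \<Phi>'_def
  proof (rule continuous_on_cases_le[OF _ _ continuous_on_id])
    show "continuous_on {t \<in> {0..real (Suc L)}. t \<le> real L} \<Phi>"
      using flow by (auto simp: piecewise_flow_def elim: continuous_on_subset)
    show "continuous_on {t \<in> {0..real (Suc L)}. real L \<le> t}
            (\<lambda>t. mexp ((t - real L) *\<^sub>R A) ** \<Phi> (real L))"
      by (intro bounded_bilinear.continuous_on[OF bounded_bilinear_matrix_mult]
            continuous_on_compose2[OF continuous_on_mexp] continuous_intros) auto
  qed (simp add: mexp_zero)
  moreover have "(\<Phi>' has_vector_derivative R' t ** \<Phi>' t) (at t)"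
    if t: "t \<in> {0<..<real (Suc L)} - real ` {..Suc L}" for t
  proof (cases "t < real L")
    case True
    with t flow have "(\<Phi> has_vector_derivative R t ** \<Phi> t) (at t)"
      by (auto simp: piecewise_flow_def)
    then have "(\<Phi>' has_vector_derivative R t ** \<Phi> t) (at t)"
      by (rule has_vector_derivative_transform_within_open[of _ _ _ "{..<real L}"])
         (use True in \<open>auto simp: \<Phi>'_def\<close>)
    with True show ?thesis
      by (simp add: \<Phi>'_def R'_def)
  next
    case False
    with t have "real L < t"
      by (cases "t = real L") auto
    have "(\<Phi>' has_vector_derivative A ** (mexp ((t - real L) *\<^sub>R A) ** \<Phi> (real L))) (at t)"
      by (rule has_vector_derivative_transform_within_open[OF has_vector_derivative_mexp_shift,
            where S = "{real L<..}"])
         (use \<open>real L < t\<close> in \<open>auto simp: \<Phi>'_def\<close>)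
    with \<open>real L < t\<close> show ?thesis
      by (simp add: \<Phi>'_def R'_def)
  qed
  ultimately show ?thesis
    using flow A by (auto simp: piecewise_flow_def \<Phi>'_def R'_def)
qed

lemma exp_products_piecewise_flow:
  assumes T: "subspace T" and M: "0 \<le> M"
  shows "g \<in> exp_products T M L \<Longrightarrow> \<exists>R \<Phi>. piecewise_flow T M L R \<Phi> \<and> \<Phi> (real L) = g"
proof (induction L arbitrary: g)
  case 0
  then show ?case
    using T M by (intro exI[of _ "\<lambda>_. 0"] exI[of _ "\<lambda>_. mat 1"])
                (auto simp: piecewise_flow_def subspace_0)
next
  case (Suc L)
  then obtain A h where g: "g = mexp A ** h" "A \<in> T" "norm A \<le> M" "h \<in> exp_products T M L"
    by (auto elim: exp_products_SucE)
  then obtain R \<Phi> where flow: "piecewise_flow T M L R \<Phi>" and "\<Phi> (real L) = h"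
    using Suc.IH by blast
  let ?\<Phi> = "\<lambda>t. if t \<le> real L then \<Phi> t else mexp ((t - real L) *\<^sub>R A) ** \<Phi> (real L)"
  have "?\<Phi> (real (Suc L)) = g"
    using \<open>\<Phi> (real L) = h\<close> g(1) by simp
  with piecewise_flow_extend[OF flow g(2,3)] show ?case
    by blast
qed

lemma piecewise_flow_rescale:
  assumes flow: "piecewise_flow T M L R \<Phi>" and L: "0 < L"
  shows "fundamental_solution (\<lambda>t. real L *\<^sub>R R (real L * t)) (\<lambda>t. \<Phi> (real L * t))"
  unfolding fundamental_solution_def
proof
  fix \<tau> :: real
  assume \<tau>: "\<tau> \<in> {0..1}"
  have "((\<lambda>s. (real L *\<^sub>R R (real L * s)) ** \<Phi> (real L * s)) has_integral
          (\<Phi> (real L * \<tau>) - \<Phi> (real L * 0))) {0..\<tau>}"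
  proof (rule fundamental_theorem_of_calculus_interior_strong[of "(\<lambda>k. real k / real L) ` {..L}"])
    have "continuous_on {0..real L} \<Phi>"
      using flow by (simp add: piecewise_flow_def)
    then show "continuous_on {0..\<tau>} (\<lambda>t. \<Phi> (real L * t))"
      by (rule continuous_on_compose2[OF _ continuous_on_mult_left[OF continuous_on_id]])
         (use \<tau> in \<open>auto intro!: mult_left_le\<close>)
    fix x
    assume x: "x \<in> {0<..<\<tau>} - (\<lambda>k. real k / real L) ` {..L}"
    then have "real L * x \<noteq> real k" if "k \<le> L" for k
      using that L by (auto simp: field_simps)
    with x \<tau> L have "real L * x \<in> {0<..<real L} - real ` {..L}"
      by auto
    then have "(\<Phi> has_vector_derivative R (real L * x) ** \<Phi> (real L * x)) (at (real L * x))"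
      using flow by (auto simp: piecewise_flow_def)
    moreover have "((\<lambda>x. real L * x) has_vector_derivative real L) (at x)"
      by (auto intro!: derivative_eq_intros)
    ultimately show "((\<lambda>t. \<Phi> (real L * t)) has_vector_derivative
                       (real L *\<^sub>R R (real L * x)) ** \<Phi> (real L * x)) (at x)"
      using vector_diff_chain_at[of "\<lambda>x. real L * x" "real L" x \<Phi>]
      by (simp add: o_def scalar_matrix_assoc[symmetric])
  qed (use \<tau> in auto)
  then show "((\<lambda>s. (real L *\<^sub>R R (real L * s)) ** \<Phi> (real L * s)) has_integral
               (\<Phi> (real L * \<tau>) - mat 1)) {0..\<tau>}"
    using flow by (simp add: piecewise_flow_def)
qed

lemma exp_products_fundamental_solution:
  assumes T: "subspace T" and M: "0 \<le> M" and g: "g \<in> exp_products T M L"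
  shows "\<exists>R \<Phi>. (\<forall>t\<in>{0..1}. R t \<in> T \<and> norm (R t) \<le> real L * M) \<and>
           fundamental_solution R \<Phi> \<and> \<Phi> 1 = g"
proof (cases "L = 0")
  case True
  with g have "g = mat 1"
    by simp
  then show ?thesis
    using T M by (intro exI[of _ "\<lambda>_. 0"] exI[of _ "\<lambda>_. mat 1"])
                (auto simp: subspace_0 fundamental_solution_def)
next
  case False
  obtain R \<Phi> where flow: "piecewise_flow T M L R \<Phi>" and "\<Phi> (real L) = g"
    using exp_products_piecewise_flow[OF T M g] by blast
  have "real L *\<^sub>R R (real L * t) \<in> T \<and> norm (real L *\<^sub>R R (real L * t)) \<le> real L * M"
    if "t \<in> {0..1}" for t
  proof -
    have "real L * t \<in> {0..real L}"
      using that by (auto intro: mult_left_le)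
    then have "R (real L * t) \<in> T" "norm (R (real L * t)) \<le> M"
      using flow by (auto simp: piecewise_flow_def)
    then show ?thesis
      using T by (simp add: subspace_scale mult_left_mono)
  qed
  with False piecewise_flow_rescale[OF flow] \<open>\<Phi> (real L) = g\<close> show ?thesis
    by (intro exI[of _ "\<lambda>t. real L *\<^sub>R R (real L * t)"] exI[of _ "\<lambda>t. \<Phi> (real L * t)"]) auto
qed

section \<open>Reachable directions\<close>

lemma proj_eqI: "y \<noteq> 0 \<Longrightarrow> c \<noteq> 0 \<Longrightarrow> x = c *\<^sub>R y \<Longrightarrow> proj_eq x y"
  unfolding proj_eq_def by auto

lemma proj_eq_scaleR_right:
  assumes "proj_eq x y" "c \<noteq> 0"
  shows "proj_eq x (c *\<^sub>R y)"
proof -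
  obtain a where "a \<noteq> 0" "x = a *\<^sub>R y" "y \<noteq> 0"
    using assms(1) unfolding proj_eq_def by blast
  with assms(2) show ?thesis
    by (intro proj_eqI[of _ "a / c"]) auto
qed

lemma proj_eq_matrix_vector_mult:
  assumes "proj_eq x y" "proj_eq (h *v y) z"
  shows "proj_eq (h *v x) z"
proof -
  obtain c d where "c \<noteq> 0" "x = c *\<^sub>R y" "d \<noteq> 0" "h *v y = d *\<^sub>R z" "z \<noteq> 0"
    using assms unfolding proj_eq_def by blast
  then show ?thesis
    by (intro proj_eqI[of z "c * d"]) (simp_all add: matrix_vector_mult_scaleR)
qed

lemma proj_eq_left_inverse:
  assumes "proj_eq (g *v w) u" "g' ** g = mat 1"
  shows "proj_eq (g' *v u) w"
proof -
  obtain c where c: "c \<noteq> 0" "g *v w = c *\<^sub>R u"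
    using assms(1) unfolding proj_eq_def by blast
  have "w \<noteq> 0"
    using assms(1) unfolding proj_eq_def by auto
  moreover have "g' *v u = (1 / c) *\<^sub>R (g' *v (g *v w))"
    using c by (simp add: matrix_vector_mult_scaleR)
  then have "g' *v u = (1 / c) *\<^sub>R w"
    using assms(2) by (simp add: matrix_vector_mul_assoc)
  ultimately show ?thesis
    using c by (intro proj_eqI) auto
qed

lemma accessible_subspace: "accessible T \<Longrightarrow> subspace T"
  unfolding accessible_def lie_subalgebra_def by blast

definition reachable_in :: "(real^'n^'n) set \<Rightarrow> nat \<Rightarrow> real^'n \<Rightarrow> real^'n \<Rightarrow> bool" where
  "reachable_in T n w v \<longleftrightarrow> (\<exists>g\<in>exp_products T (real n) n. proj_eq (g *v w) v)"

lemma reachable_in_mono: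
  "subspace T \<Longrightarrow> m \<le> n \<Longrightarrow> reachable_in T m w v \<Longrightarrow> reachable_in T n w v"
  unfolding reachable_in_def using exp_products_mono_nat by blast

text \<open>The pieces \<open>{c *\<^sub>R (g *v w) | g \<in> G\<^sub>N, 1 / (N + 1) \<le> \<bar>c\<bar> \<le> N}\<close> are compact
  and exhaust \<open>\<real>\<^sup>d - {0}\<close>, so by Baire's theorem one of them contains a ball.\<close>
definition scaled_orbit_part :: "(real^'n^'n) set \<Rightarrow> real^'n \<Rightarrow> nat \<Rightarrow> (real^'n) set" where
  "scaled_orbit_part T w N = (\<lambda>(g, c). c *\<^sub>R (g *v w)) `
     (exp_products T (real N) N \<times> (cball 0 (real N) - ball 0 (1 / (real N + 1))))"

lemma compact_scaled_orbit_part: "closed T \<Longrightarrow> compact (scaled_orbit_part T w N)"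
  unfolding scaled_orbit_part_def case_prod_unfold
  by (intro compact_continuous_image compact_Times compact_exp_products compact_diff
        continuous_intros bounded_bilinear.continuous_on[OF bounded_bilinear_matrix_vector_mult]) auto

lemma scaled_orbit_part_reachable:
  assumes "subspace T" "w \<noteq> 0" "q \<in> scaled_orbit_part T w N"
  shows "reachable_in T N w q"
proof -
  obtain g c where g: "g \<in> exp_products T (real N) N" "q = c *\<^sub>R (g *v w)"
    and "c \<notin> ball 0 (1 / (real N + 1))"
    using assms(3) unfolding scaled_orbit_part_def by fastforce
  then have "c \<noteq> 0"
    by auto
  moreover have "g *v w \<noteq> 0"
    using exp_products_matrix_vector_mult_nonzero[OF assms(1) g(1) assms(2)] .
  ultimately have "proj_eq (g *v w) q"
    using g(2) by (intro proj_eqI[of _ "1 / c"]) auto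
  with g(1) show ?thesis
    unfolding reachable_in_def by blast
qed

lemma scaled_orbit_parts_cover:
  assumes "accessible T" "w \<noteq> 0" "x \<noteq> 0"
  shows "\<exists>N. x \<in> scaled_orbit_part T w N"
proof -
  have T: "subspace T"
    using assms(1) by (rule accessible_subspace)
  obtain g where "g \<in> lie_group_of T" "proj_eq (g *v w) x"
    using assms unfolding accessible_def by blast
  then obtain n c where g: "g \<in> exp_products T (real n) n" and c: "c \<noteq> 0" "g *v w = c *\<^sub>R x"
    using lie_group_of_subset_exp_products[OF T] unfolding proj_eq_def by blast
  define N where "N = n + nat \<lceil>\<bar>c\<bar> + \<bar>1 / c\<bar>\<rceil>"
  have N: "n \<le> N" "\<bar>c\<bar> \<le> real N" "\<bar>1 / c\<bar> \<le> real N"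
    unfolding N_def by linarith+
  have "g \<in> exp_products T (real N) N"
    using exp_products_mono_nat[OF T N(1)] g by blast
  moreover have "1 / (real N + 1) \<le> \<bar>1 / c\<bar>"
    using N(2) c(1) by (simp add: abs_divide divide_simps)
  moreover have "x = (1 / c) *\<^sub>R (g *v w)"
    using c by simp
  ultimately show ?thesis
    unfolding scaled_orbit_part_def using N(3)
    by (intro exI image_eqI[where x = "(g, 1 / c)"]) auto
qed

lemma scaled_orbit_part_contains_ball:
  assumes "accessible T" "w \<noteq> 0"
  shows "\<exists>N p e. 0 < e \<and> ball p e \<subseteq> scaled_orbit_part T w N"
proof (rule ccontr)
  assume no_ball: "\<not> ?thesis"
  have "closed T"
    using assms(1) by (intro closed_subspace accessible_subspace)
  let ?G = "insert {0} (range (scaled_orbit_part T w))"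
  have "closed S \<and> interior S = {}" if "S \<in> ?G" for S
    using that no_ball compact_imp_closed[OF compact_scaled_orbit_part[OF \<open>closed T\<close>]]
    by (auto simp: mem_interior)
  then have "euclidean interior_of \<Union> ?G = {}"
    by (intro Baire_category_alt disjI1 completely_metrizable_space_euclidean)
       (auto simp: closed_closedin[symmetric] euclidean_interior_of)
  moreover have "\<Union> ?G = UNIV"
    using scaled_orbit_parts_cover[OF assms] by blast
  ultimately show False
    by (simp add: euclidean_interior_of)
qed

text \<open>Pull the ball inside a scaled orbit part back through a group element that carries its
  centre to the direction of \<open>v\<close>.\<close>
lemma reachable_in_neighbourhood:
  assumes acc: "accessible T" and w: "w \<noteq> 0" and v: "v \<noteq> 0"
  shows "\<exists>U n. open U \<and> v \<in> U \<and> (\<forall>v'\<in>U. v' \<noteq> 0 \<longrightarrow> reachable_in T n w v')"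
proof -
  have T: "subspace T"
    using acc by (rule accessible_subspace)
  obtain N p e where e: "0 < e" and ball: "ball p e \<subseteq> scaled_orbit_part T w N"
    using scaled_orbit_part_contains_ball[OF acc w] by blast
  then have "reachable_in T N w p"
    using scaled_orbit_part_reachable[OF T w] centre_in_ball by blast
  then have "p \<noteq> 0"
    unfolding reachable_in_def proj_eq_def by blast
  then obtain h where h: "h \<in> lie_group_of T" "proj_eq (h *v p) v"
    using acc v unfolding accessible_def by blast
  then obtain \<mu> where \<mu>: "\<mu> \<noteq> 0" "h *v p = \<mu> *\<^sub>R v"
    unfolding proj_eq_def by blast
  obtain m where hm: "h \<in> exp_products T (real m) m"
    using lie_group_of_subset_exp_products[OF T h(1)] by blast
  obtain h' where h': "h' ** h = mat 1" "h ** h' = mat 1"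
    using exp_products_inverse[OF T hm] by blast
  define U where "U = (\<lambda>x. \<mu> *\<^sub>R (h' *v x)) -` ball p e"
  have "open U"
    unfolding U_def by (intro open_vimage continuous_intros) simp
  moreover have "v \<in> U"
  proof -
    have "\<mu> *\<^sub>R (h' *v v) = h' *v (h *v p)"
      using \<mu>(2) by (simp add: matrix_vector_mult_scaleR)
    also have "\<dots> = p"
      using h'(1) by (simp add: matrix_vector_mul_assoc)
    finally show ?thesis
      using e by (simp add: U_def)
  qed
  moreover have "reachable_in T (m + N) w v'" if "v' \<in> U" "v' \<noteq> 0" for v'
  proof -
    define q where "q = \<mu> *\<^sub>R (h' *v v')"
    have "q \<in> scaled_orbit_part T w N"
      using that(1) ball unfolding U_def q_def by auto
    then obtain g where g: "g \<in> exp_products T (real N) N" "proj_eq (g *v w) q"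
      using scaled_orbit_part_reachable[OF T w] unfolding reachable_in_def by blast
    have "h *v q = \<mu> *\<^sub>R v'"
      using h'(2) by (simp add: q_def matrix_vector_mult_scaleR matrix_vector_mul_assoc)
    then have "proj_eq (h *v q) v'"
      using \<mu>(1) that(2) by (intro proj_eqI)
    then have "proj_eq (h *v (g *v w)) v'"
      by (rule proj_eq_matrix_vector_mult[OF g(2)])
    moreover have "h ** g \<in> exp_products T (real (m + N)) (m + N)"
    proof (rule mult_mem_exp_products)
      show "h \<in> exp_products T (real (m + N)) m"
        using hm exp_products_mono_bound[of "real m" "real (m + N)" T m] by auto
      show "g \<in> exp_products T (real (m + N)) N"
        using g(1) exp_products_mono_bound[of "real N" "real (m + N)" T N] by auto
    qed
    ultimately show ?thesis
      unfolding reachable_in_def by (metis matrix_vector_mul_assoc)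
  qed
  ultimately show ?thesis
    by blast
qed

lemma uniformly_reachable:
  assumes acc: "accessible T" and w: "w \<noteq> 0"
  shows "\<exists>n. \<forall>v. v \<noteq> 0 \<longrightarrow> reachable_in T n w v"
proof -
  have T: "subspace T"
    using acc by (rule accessible_subspace)
  obtain U n where U: "\<And>v. v \<noteq> 0 \<Longrightarrow> open (U v) \<and> v \<in> U v \<and>
      (\<forall>v'\<in>U v. v' \<noteq> 0 \<longrightarrow> reachable_in T (n v) w v')"
    using reachable_in_neighbourhood[OF acc w] by metis
  obtain C where C: "C \<subseteq> sphere 0 1" "finite C" "sphere 0 1 \<subseteq> (\<Union>c\<in>C. U c)"
  proof (rule compactE_image[of "sphere 0 1" "sphere 0 1" U])
    have nonzero: "v \<in> sphere 0 1 \<Longrightarrow> v \<noteq> 0" for v :: "real^'n"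
      by auto
    show "open (U v)" if "v \<in> sphere 0 1" for v
      using U nonzero that by blast
    show "sphere 0 1 \<subseteq> (\<Union>v\<in>sphere 0 1. U v)"
      using U nonzero by blast
  qed auto
  have "reachable_in T (Max (n ` C)) w v" if "v \<noteq> 0" for v
  proof -
    have "(1 / norm v) *\<^sub>R v \<in> sphere 0 1"
      using that by simp
    then obtain c where c: "c \<in> C" "(1 / norm v) *\<^sub>R v \<in> U c"
      using C(3) by blast
    then have "c \<noteq> 0"
      using C(1) by auto
    then have "reachable_in T (n c) w ((1 / norm v) *\<^sub>R v)"
      using U c that by simp
    then have "reachable_in T (n c) w v"
      using proj_eq_scaleR_right[of _ "(1 / norm v) *\<^sub>R v" "norm v"] that
      unfolding reachable_in_def by auto
    then show ?thesis
      using reachable_in_mono[OF T] C(2) c(1) by (meson Max_ge finite_imageI imageI)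
  qed
  then show ?thesis
    by blast
qed

lemma steering_between_reachable:
  assumes T: "subspace T" and "reachable_in T n w u" "reachable_in T n w v"
  shows "\<exists>R \<Phi>. (\<forall>t\<in>{0..1}. R t \<in> T \<and> norm (R t) \<le> real (n + n) * real n) \<and>
           fundamental_solution R \<Phi> \<and> proj_eq (\<Phi> 1 *v u) v"
proof -
  obtain gu gv where gu: "gu \<in> exp_products T (real n) n" "proj_eq (gu *v w) u"
    and gv: "gv \<in> exp_products T (real n) n" "proj_eq (gv *v w) v"
    using assms(2,3) unfolding reachable_in_def by blast
  obtain gu' where gu': "gu' \<in> exp_products T (real n) n" "gu' ** gu = mat 1"
    using exp_products_inverse[OF T gu(1)] by blast
  have "proj_eq ((gv ** gu') *v u) v"
    using proj_eq_matrix_vector_mult[OF proj_eq_left_inverse[OF gu(2) gu'(2)] gv(2)]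
    by (simp add: matrix_vector_mul_assoc)
  with exp_products_fundamental_solution[OF T _ mult_mem_exp_products[OF gv(1) gu'(1)]]
  show ?thesis
    by fastforce
qed

theorem lemma3p6:
  fixes T :: "(real^'n^'n) set"
  assumes "accessible T"
  shows "\<exists>K>0. \<forall>u v :: real^'n. u \<noteq> 0 \<longrightarrow> v \<noteq> 0 \<longrightarrow>
           (\<exists>R \<Phi>. (\<forall>t\<in>{0..1}. R t \<in> T \<and> norm (R t) \<le> K) \<and>
                   fundamental_solution R \<Phi> \<and> proj_eq (\<Phi> 1 *v u) v)"
proof -
  have T: "subspace T"
    using assms by (rule accessible_subspace)
  have "(\<chi> i. 1) \<noteq> (0 :: real^'n)"
    by (simp add: vec_eq_iff)
  then obtain n where n: "\<And>v. v \<noteq> 0 \<Longrightarrow> reachable_in T n (\<chi> i. 1) v"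
    using uniformly_reachable[OF assms] by blast
  have "\<exists>R \<Phi>. (\<forall>t\<in>{0..1}. R t \<in> T \<and> norm (R t) \<le> real (n + n) * real n + 1) \<and>
              fundamental_solution R \<Phi> \<and> proj_eq (\<Phi> 1 *v u) v"
    if "u \<noteq> 0" "v \<noteq> 0" for u v :: "real^'n"
    using steering_between_reachable[OF T n[OF that(1)] n[OF that(2)]] by fastforce
  moreover have "real (n + n) * real n + 1 > 0"
    by (simp add: add_nonneg_pos)
  ultimately show ?thesis
    by blast
qed

end
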